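(* Let $V$ be a finite-dimensional complex vector space with a Hermitian inner product and norm $\|\cdot\|$, let $\mathbf G$ be a finite group of unitary transformations of $V$, and let $\mathbf x_0\in V$ with $\|\mathbf x_0\|=1$ have full orbit under $\mathbf G$. Fix a subgroup sequence $\{I\}=\mathbf G_0<\mathbf G_1<\cdots<\mathbf G_m=\mathbf G$ and coset leader sets $\operatorname{CL}(\mathbf G_k/\mathbf G_{k-1})$, $1\le k\le m$. Then the subgroup decoding algorithm decodes correctly with some noise if and only if, for every $k$ with $0\le k<m$, every induced coset leader in $\operatorname{CL}(\mathbf G/\mathbf G_k)$ is minimal (as a coset representative of $\mathbf G_k$ in $\mathbf G$).
   Context: $\mathbf x_0$ has full orbit if $|\mathbf G\mathbf x_0|=|\mathbf G|$; $S=\operatorname{Stab}_{\mathbf G}(\mathbf x_0)$, and for a subgroup $H$, $\operatorname{Stab}_H(\mathbf x_0)=H\cap S$. Codewords are the vectors $g^{-1}\mathbf x_0$, $g\in\mathbf G$. A set $\operatorname{CL}(\mathbf G_k/\mathbf G_{k-1})$ of coset leaders is a set of representatives of the left cosets $a\mathbf G_{k-1}$ of $\mathbf G_{k-1}$ in $\mathbf G_k$ containing $I$. For $k<l$ the induced coset leaders are $\operatorname{CL}(\mathbf G_l/\mathbf G_k)=\{c_l c_{l-1}\cdots c_{k+1}: c_i\in\operatorname{CL}(\mathbf G_i/\mathbf G_{i-1})\}$, a complete set of left coset representatives of $\mathbf G_k$ in $\mathbf G_l$. Subgroup decoding algorithm: given $\mathbf r\in V$, set $\mathbf r_0=\mathbf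 r$; for $k=1,\dots,m$ choose $d_k\in\operatorname{CL}(\mathbf G_k/\mathbf G_{k-1})$ minimizing $\|a\mathbf r_{k-1}-\mathbf x_0\|$ over $a\in\operatorname{CL}(\mathbf G_k/\mathbf G_{k-1})$ (ties broken by a fixed ordering) and set $\mathbf r_k=d_k\mathbf r_{k-1}$; output $g'=d_m\cdots d_1$. It decodes correctly with some noise if there is $\delta>0$ such that for all $g\in\mathbf G$ and $\mathbf r\in V$ with $\|\mathbf r-g^{-1}\mathbf x_0\|<\delta$ the output lies in $Sg$. Fundamental region of a subgroup $H$: $\operatorname{FR}(H)=\{\mathbf x\in V:\|\mathbf x-\mathbf x_0\|<\|h\mathbf x-\mathbf x_0\|\text{ for all }h\in H\setminus\operatorname{Stab}_H(\mathbf x_0)\}$. For subgroups $H\le K$, a coset representative $c$ of $H$ in $K$ is minimal if $\mathbf x_0\in c(\operatorname{FR}(H))$. *)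

theory Defs
  imports "HOL-Analysis.Analysis"
begin

text \<open>The space V is modelled as complex^'n with its standard Hermitian norm
  (the euclidean norm of the vector type). Group elements are maps V => V.\<close>

type_synonym 'n vmap = "complex^'n \<Rightarrow> complex^'n"

definition clinear_map :: "'n::finite vmap \<Rightarrow> bool" where
  "clinear_map f \<longleftrightarrow> (\<forall>x y. f (x + y) = f x + f y) \<and> (\<forall>c x. f (c *s x) = c *s f x)"

definition unitary_map :: "'n::finite vmap \<Rightarrow> bool" where
  "unitary_map f \<longleftrightarrow> clinear_map f \<and> bij f \<and> (\<forall>x. norm (f x) = norm x)"

definition subgroup_of :: "'n::finite vmap set \<Rightarrow> 'n vmap set \<Rightarrow> bool" where
  "subgroup_of H K \<longleftrightarrow> H \<subseteq> K \<and> id \<in> H \<and> (\<forall>a\<in>H. \<forall>b\<in>H. a \<circ> b \<in> H)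
     \<and> (\<forall>a\<in>H. inv a \<in> H)"

definition finite_unitary_group :: "'n::finite vmap set \<Rightarrow> bool" where
  "finite_unitary_group G \<longleftrightarrow> finite G \<and> (\<forall>g\<in>G. unitary_map g) \<and> subgroup_of G G"

definition full_orbit :: "'n::finite vmap set \<Rightarrow> complex^'n \<Rightarrow> bool" where
  "full_orbit G x0 \<longleftrightarrow> card ((\<lambda>g. g x0) ` G) = card G"

definition stab :: "'n::finite vmap set \<Rightarrow> complex^'n \<Rightarrow> 'n vmap set" where
  "stab H x0 = {h\<in>H. h x0 = x0}"

definition left_coset :: "'n::finite vmap \<Rightarrow> 'n vmap set \<Rightarrow> 'n vmap set" where
  "left_coset a H = (\<lambda>h. a \<circ> h) ` H"

text \<open>cl k : a list enumerating CL(G_k/G_{k-1}) without repetitions; the list order is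
  the fixed ordering used to break ties.\<close>
definition coset_leaders :: "'n::finite vmap list \<Rightarrow> 'n vmap set \<Rightarrow> 'n vmap set \<Rightarrow> bool" where
  "coset_leaders L H K \<longleftrightarrow> distinct L \<and> set L \<subseteq> K \<and> id \<in> set L
     \<and> (\<forall>a\<in>K. \<exists>!c. c \<in> set L \<and> c \<in> left_coset a H)"

definition subgroup_chain :: "(nat \<Rightarrow> 'n::finite vmap set) \<Rightarrow> nat \<Rightarrow> 'n vmap set \<Rightarrow> bool" where
  "subgroup_chain Gs m G \<longleftrightarrow> Gs 0 = {id} \<and> Gs m = G
     \<and> (\<forall>k. 1 \<le> k \<and> k \<le> m \<longrightarrow> subgroup_of (Gs (k - 1)) (Gs k) \<and> Gs (k - 1) \<subset> Gs k)
     \<and> (\<forall>k\<le>m. subgroup_of (Gs k) G)"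

fun first_min :: "('a \<Rightarrow> real) \<Rightarrow> 'a list \<Rightarrow> 'a" where
  "first_min f [] = undefined"
| "first_min f [a] = a"
| "first_min f (a # b # xs) = (let c = first_min f (b # xs) in if f a \<le> f c then a else c)"

text \<open>State after k decoding steps: (r_k, d_k o ... o d_1).\<close>
fun dec_state :: "complex^'n \<Rightarrow> (nat \<Rightarrow> 'n::finite vmap list) \<Rightarrow> complex^'n \<Rightarrow> nat
                   \<Rightarrow> (complex^'n) \<times> 'n vmap" where
  "dec_state x0 cl r 0 = (r, id)"
| "dec_state x0 cl r (Suc k) =
     (let (rk, g) = dec_state x0 cl r k;
          d = first_min (\<lambda>a. norm (a rk - x0)) (cl (Suc k))
      in (d rk, d \<circ> g))"

definition subgroup_decode ::
  "complex^'n \<Rightarrow> (nat \<Rightarrow> 'n::finite vmap list) \<Rightarrow> nat \<Rightarrow> complex^'n \<Rightarrow> 'n vmap" where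
  "subgroup_decode x0 cl m r = snd (dec_state x0 cl r m)"

definition decodes_correctly_with_noise ::
  "'n::finite vmap set \<Rightarrow> complex^'n \<Rightarrow> (nat \<Rightarrow> 'n vmap list) \<Rightarrow> nat \<Rightarrow> bool" where
  "decodes_correctly_with_noise G x0 cl m \<longleftrightarrow>
     (\<exists>\<delta>>0. \<forall>g\<in>G. \<forall>r. norm (r - inv g x0) < \<delta> \<longrightarrow>
        subgroup_decode x0 cl m r \<in> (\<lambda>s. s \<circ> g) ` stab G x0)"

definition fundamental_region :: "'n::finite vmap set \<Rightarrow> complex^'n \<Rightarrow> (complex^'n) set" where
  "fundamental_region H x0 =
     {x. \<forall>h\<in>H - stab H x0. norm (x - x0) < norm (h x - x0)}"

text \<open>Induced coset leaders CL(G_{k+j}/G_k) = {c_{k+j} o ... o c_{k+1}}.\<close>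
fun induced_cl :: "(nat \<Rightarrow> 'n::finite vmap list) \<Rightarrow> nat \<Rightarrow> nat \<Rightarrow> 'n vmap set" where
  "induced_cl cl k 0 = {id}"
| "induced_cl cl k (Suc j) = {c \<circ> d | c d. c \<in> set (cl (k + Suc j)) \<and> d \<in> induced_cl cl k j}"

definition minimal_rep :: "complex^'n \<Rightarrow> 'n::finite vmap set \<Rightarrow> 'n vmap \<Rightarrow> bool" where
  "minimal_rep x0 H c \<longleftrightarrow> x0 \<in> c ` fundamental_region H x0"

end

theory Submission
  imports Defs
begin

text \<open>Because \<open>x0\<close> has full orbit, every \<open>g \<in> G\<close> factors uniquely through the chosen
  coset leaders, and the decoder is correct precisely when at every stage it selects the
  leader occurring in the factorisation of the transmitted element. If all induced leaders are
  minimal, the finitely many distances \<open>\<parallel>a x0 - x0\<parallel>\<close> are separated by some gap, and noise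
  below half that gap cannot change any comparison the decoder makes. Conversely, if decoding
  is correct, then near the codeword of a product \<open>d \<circ> c\<close> the decoder must prefer \<open>c\<close>
  over \<open>id\<close> on a whole ball; a ball cannot lie on the wrong side of the bisector of \<open>x0\<close> and
  \<open>inv c x0\<close> unless its centre does strictly, which yields minimality stage by stage.\<close>

lemma first_min_in_set: "xs \<noteq> [] \<Longrightarrow> first_min f xs \<in> set xs"
  by (induction f xs rule: first_min.induct) (auto simp: Let_def)

lemma first_min_le: "a \<in> set xs \<Longrightarrow> f (first_min f xs) \<le> f a"
  by (induction f xs rule: first_min.induct) (auto simp: Let_def)

lemma first_min_eqI:
  assumes "c \<in> set xs" and "\<And>a. a \<in> set xs \<Longrightarrow> a \<noteq> c \<Longrightarrow> f c < f a"
  shows "first_min f xs = c"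
  using first_min_in_set[of xs f] first_min_le[OF assms(1), of f] assms by force

lemma dec_state_fst: "fst (dec_state x0 cl r k) = snd (dec_state x0 cl r k) r"
  by (induction k) (simp_all add: split_beta Let_def)

lemma dec_state_snd_Suc:
  "snd (dec_state x0 cl r (Suc k)) =
     first_min (\<lambda>a. norm (a (snd (dec_state x0 cl r k) r) - x0)) (cl (Suc k)) \<circ> snd (dec_state x0 cl r k)"
  by (simp add: split_beta Let_def dec_state_fst)

declare dec_state.simps(2) [simp del]

lemma induced_cl_Suc_right:
  "induced_cl cl k (Suc j) = {d \<circ> c | d c. d \<in> induced_cl cl (Suc k) j \<and> c \<in> set (cl (Suc k))}"
proof (induction j)
  case (Suc j)
  have "induced_cl cl k (Suc (Suc j)) =
      {c' \<circ> (d \<circ> c) | c' d c. c' \<in> set (cl (Suc k + Suc j)) \<and> d \<in> induced_cl cl (Suc k) j \<and> c \<in> set (cl (Suc k))}"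
    unfolding induced_cl.simps(2)[of cl k "Suc j"] Suc by auto
  also have "\<dots> = {d \<circ> c | d c. d \<in> induced_cl cl (Suc k) (Suc j) \<and> c \<in> set (cl (Suc k))}"
    by (auto simp: o_assoc)
  finally show ?case .
qed auto

lemma norm_shift_toward_lt:
  fixes z a b :: "'a::real_inner"
  assumes "norm (z - a) = norm (z - b)" and "a \<noteq> b" and "t > 0"
  shows "norm (z + t *\<^sub>R (a - b) - a) < norm (z + t *\<^sub>R (a - b) - b)"
proof -
  define e where "e = a - b"
  have "(norm (z + t *\<^sub>R e - b))\<^sup>2 - (norm (z + t *\<^sub>R e - a))\<^sup>2
      = (norm (z - b))\<^sup>2 - (norm (z - a))\<^sup>2 + 2 * t * inner e e"
    unfolding power2_norm_eq_inner e_def by (simp add: inner_commute algebra_simps)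
  also have "\<dots> > 0" using assms by (simp add: e_def)
  finally have "(norm (z + t *\<^sub>R e - a))\<^sup>2 < (norm (z + t *\<^sub>R e - b))\<^sup>2" by simp
  thus ?thesis unfolding e_def by (simp add: power_less_imp_less_base)
qed

lemma norm_lt_if_ball_le:
  fixes z a b :: "'a::real_inner"
  assumes "\<delta> > 0" and "a \<noteq> b" and ball: "\<And>r. norm (r - z) < \<delta> \<Longrightarrow> norm (r - a) \<le> norm (r - b)"
  shows "norm (z - a) < norm (z - b)"
proof (rule ccontr)
  assume "\<not> ?thesis"
  hence eq: "norm (z - b) = norm (z - a)" using ball[of z] \<open>\<delta> > 0\<close> by simp
  define t where "t = \<delta> / (2 * norm (b - a))"
  have t: "t > 0" unfolding t_def using assms by simp
  have "norm (z + t *\<^sub>R (b - a) - z) = \<delta> / 2" unfolding t_def using assms by simp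
  hence "norm (z + t *\<^sub>R (b - a) - a) \<le> norm (z + t *\<^sub>R (b - a) - b)" using \<open>\<delta> > 0\<close> by (intro ball) simp
  with norm_shift_toward_lt[OF eq _ t] assms(2) show False by simp
qed

lemma finite_real_set_separated:
  fixes S :: "real set"
  assumes "finite S"
  obtains \<delta> where "\<delta> > 0" "\<And>s t. s \<in> S \<Longrightarrow> t \<in> S \<Longrightarrow> s < t \<Longrightarrow> \<delta> \<le> t - s"
proof
  let ?D = "insert 1 {t - s | s t. s \<in> S \<and> t \<in> S \<and> s < t}"
  have "{t - s | s t. s \<in> S \<and> t \<in> S \<and> s < t} \<subseteq> (\<lambda>(s, t). t - s) ` (S \<times> S)"
    by auto
  hence fin: "finite ?D" using assms finite_subset by blast
  show "Min ?D > 0" using fin by (subst Min_gr_iff) auto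
  show "Min ?D \<le> t - s" if "s \<in> S" "t \<in> S" "s < t" for s t
    using fin that by (intro Min_le) auto
qed

locale subgroup_decoding =
  fixes G :: "'n::finite vmap set" and x0 :: "complex^'n" and Gs :: "nat \<Rightarrow> 'n vmap set"
    and m :: nat and cl :: "nat \<Rightarrow> 'n vmap list"
  assumes finite_G: "finite G"
    and unitary: "\<And>g. g \<in> G \<Longrightarrow> unitary_map g"
    and group_G: "subgroup_of G G"
    and inj_orbit: "inj_on (\<lambda>g. g x0) G"
    and chain: "subgroup_chain Gs m G"
    and coset_leaders_cl: "\<And>k. 1 \<le> k \<Longrightarrow> k \<le> m \<Longrightarrow> coset_leaders (cl k) (Gs (k - 1)) (Gs k)"
begin

lemma G_bij: "g \<in> G \<Longrightarrow> bij g"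
  using unitary unfolding unitary_map_def by blast

lemma G_dist: assumes "g \<in> G" shows "norm (g x - g y) = norm (x - y)"
proof -
  have "g x = g (x - y) + g y"
    using unitary[OF assms] unfolding unitary_map_def clinear_map_def by (metis diff_add_cancel)
  thus ?thesis using unitary[OF assms] unfolding unitary_map_def by (simp add: algebra_simps)
qed

lemma id_in_G: "id \<in> G"
  and G_comp_closed: "a \<in> G \<Longrightarrow> b \<in> G \<Longrightarrow> a \<circ> b \<in> G"
  and G_inv_closed: "a \<in> G \<Longrightarrow> inv a \<in> G"
  using group_G unfolding subgroup_of_def by blast+

lemma G_inv_apply: "g \<in> G \<Longrightarrow> inv g (g x) = x"
  and G_apply_inv: "g \<in> G \<Longrightarrow> g (inv g x) = x"
  using G_bij bij_inv_eq_iff by metis+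

lemma G_inv_comp: "g \<in> G \<Longrightarrow> inv g \<circ> g = id"
  and G_comp_inv: "g \<in> G \<Longrightarrow> g \<circ> inv g = id"
  by (simp_all add: fun_eq_iff G_inv_apply G_apply_inv)

lemma G_inv_o: "d \<in> G \<Longrightarrow> c \<in> G \<Longrightarrow> inv (d \<circ> c) = inv c \<circ> inv d"
  using o_inv_distrib G_bij by blast

lemma G_cancel_left: "a \<in> G \<Longrightarrow> a \<circ> f = a \<circ> f' \<Longrightarrow> f = f'"
  by (metis G_inv_comp comp_assoc id_comp)

lemma eq_id_if_fixes_x0: "g \<in> G \<Longrightarrow> g x0 = x0 \<Longrightarrow> g = id"
  using inj_orbit id_in_G unfolding inj_on_def by (metis id_apply)

lemma stab_eq_id: "H \<subseteq> G \<Longrightarrow> id \<in> H \<Longrightarrow> stab H x0 = {id}"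
  unfolding stab_def using eq_id_if_fixes_x0 by auto

lemma Gs_0: "Gs 0 = {id}" and Gs_m: "Gs m = G"
  using chain unfolding subgroup_chain_def by blast+

lemma Gs_subset_G: "k \<le> m \<Longrightarrow> Gs k \<subseteq> G"
  and id_in_Gs: "k \<le> m \<Longrightarrow> id \<in> Gs k"
  and Gs_comp_closed: "k \<le> m \<Longrightarrow> a \<in> Gs k \<Longrightarrow> b \<in> Gs k \<Longrightarrow> a \<circ> b \<in> Gs k"
  and Gs_inv_closed: "k \<le> m \<Longrightarrow> a \<in> Gs k \<Longrightarrow> inv a \<in> Gs k"
  using chain unfolding subgroup_chain_def subgroup_of_def by blast+

lemma Gs_mono: "i \<le> l \<Longrightarrow> l \<le> m \<Longrightarrow> Gs i \<subseteq> Gs l"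
proof (induction l rule: dec_induct)
  case (step l)
  then have "Gs l \<subseteq> Gs (Suc l)"
    using chain unfolding subgroup_chain_def by (metis diff_Suc_1 le_add1 plus_1_eq_Suc psubset_imp_subset)
  with step show ?case by auto
qed simp

lemma cl_subset_Gs: "Suc k \<le> m \<Longrightarrow> set (cl (Suc k)) \<subseteq> Gs (Suc k)"
  and id_in_cl: "Suc k \<le> m \<Longrightarrow> id \<in> set (cl (Suc k))"
  and cl_unique: "Suc k \<le> m \<Longrightarrow> a \<in> Gs (Suc k) \<Longrightarrow> \<exists>!c. c \<in> set (cl (Suc k)) \<and> c \<in> left_coset a (Gs k)"
  using coset_leaders_cl[of "Suc k"] unfolding coset_leaders_def by auto

lemma cl_in_G: "Suc k \<le> m \<Longrightarrow> c \<in> set (cl (Suc k)) \<Longrightarrow> c \<in> G"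
  using cl_subset_Gs Gs_subset_G by blast

lemma cl_cancel:
  assumes le: "Suc k \<le> m" and c: "c \<in> set (cl (Suc k))" "c' \<in> set (cl (Suc k))"
    and h: "h \<in> Gs k" "h' \<in> Gs k" and eq: "c \<circ> h = c' \<circ> h'"
  shows "c = c' \<and> h = h'"
proof -
  have h'G: "h' \<in> G" using h(2) le Gs_subset_G[of k] by auto
  have "c' = c \<circ> (h \<circ> inv h')"
    by (metis G_comp_inv[OF h'G] comp_id eq o_assoc)
  moreover have "h \<circ> inv h' \<in> Gs k" using h le Gs_comp_closed Gs_inv_closed by simp
  ultimately have "c' \<in> left_coset c (Gs k)" unfolding left_coset_def by blast
  moreover have "c \<in> left_coset c (Gs k)" unfolding left_coset_def using id_in_Gs le
    by (metis comp_id image_eqI Suc_leD)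
  ultimately have "c = c'" using cl_unique[OF le] c cl_subset_Gs[OF le] by blast
  thus ?thesis using eq G_cancel_left cl_in_G[OF le c(1)] by blast
qed

lemma induced_cl_subset_Gs: "k + j \<le> m \<Longrightarrow> induced_cl cl k j \<subseteq> Gs (k + j)"
proof (induction j)
  case (Suc j)
  have le: "Suc (k + j) \<le> m" using Suc.prems by simp
  have "c \<circ> d \<in> Gs (Suc (k + j))" if "c \<in> set (cl (Suc (k + j)))" "d \<in> induced_cl cl k j" for c d
  proof -
    have "d \<in> Gs (Suc (k + j))" using Suc.IH le that(2) Gs_mono[of "k + j" "Suc (k + j)"] by auto
    moreover have "c \<in> Gs (Suc (k + j))" using that(1) cl_subset_Gs[OF le] by blast
    ultimately show ?thesis using le Gs_comp_closed by blast
  qed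
  thus ?case by auto
qed (use id_in_Gs in simp)

lemma induced_cl_factor:
  "k + j \<le> m \<Longrightarrow> g \<in> Gs (k + j) \<Longrightarrow> \<exists>u\<in>induced_cl cl k j. \<exists>h\<in>Gs k. g = u \<circ> h"
proof (induction j arbitrary: g)
  case (Suc j)
  have le: "Suc (k + j) \<le> m" using Suc.prems by simp
  have "g \<in> Gs (Suc (k + j))" using Suc.prems(2) by simp
  then obtain c where c: "c \<in> set (cl (Suc (k + j)))" "c \<in> left_coset g (Gs (k + j))"
    using cl_unique[OF le] by blast
  then obtain w where w: "w \<in> Gs (k + j)" "c = g \<circ> w" unfolding left_coset_def by auto
  have "w \<in> G" using w le Gs_subset_G[of "k + j"] by auto
  hence g: "g = c \<circ> inv w" using w(2) G_comp_inv by (metis comp_id o_assoc)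
  obtain u h where uh: "u \<in> induced_cl cl k j" "h \<in> Gs k" "inv w = u \<circ> h"
    using Suc.IH[of "inv w"] Gs_inv_closed w le by force
  have "c \<circ> u \<in> induced_cl cl k (Suc j)" using c uh by auto
  moreover have "g = (c \<circ> u) \<circ> h" using g uh by (simp add: o_assoc)
  ultimately show ?case using uh by blast
qed simp

lemma induced_cl_factor_unique:
  "k + j \<le> m \<Longrightarrow> u \<in> induced_cl cl k j \<Longrightarrow> u' \<in> induced_cl cl k j \<Longrightarrow>
     h \<in> Gs k \<Longrightarrow> h' \<in> Gs k \<Longrightarrow> u \<circ> h = u' \<circ> h' \<Longrightarrow> u = u' \<and> h = h'"
proof (induction j arbitrary: u u' h h')
  case (Suc j)
  have le: "Suc (k + j) \<le> m" using Suc.prems by simp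
  obtain c d where cd: "u = c \<circ> d" "c \<in> set (cl (Suc (k + j)))" "d \<in> induced_cl cl k j"
    using Suc.prems by auto
  obtain c' d' where cd': "u' = c' \<circ> d'" "c' \<in> set (cl (Suc (k + j)))" "d' \<in> induced_cl cl k j"
    using Suc.prems by auto
  have "d \<in> Gs (k + j)" "d' \<in> Gs (k + j)" "h \<in> Gs (k + j)" "h' \<in> Gs (k + j)"
    using Suc.prems(4,5) cd(3) cd'(3) le induced_cl_subset_Gs[of k j] Gs_mono[of k "k + j"] by auto
  hence "d \<circ> h \<in> Gs (k + j)" "d' \<circ> h' \<in> Gs (k + j)" using le Gs_comp_closed by simp_all
  moreover have "c \<circ> (d \<circ> h) = c' \<circ> (d' \<circ> h')" using Suc.prems(6) unfolding cd(1) cd'(1) by (simp only: o_assoc)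
  ultimately have "c = c'" "d \<circ> h = d' \<circ> h'" using cl_cancel[OF le cd(2) cd'(2)] by auto
  with Suc.IH[of d d' h h'] le cd cd' Suc.prems show ?case by simp
qed simp

definition induced_leaders :: "nat \<Rightarrow> 'n vmap set" where
  "induced_leaders k = induced_cl cl k (m - k)"

lemma induced_leaders_Suc:
  "Suc k \<le> m \<Longrightarrow> induced_leaders k = {d \<circ> c | d c. d \<in> induced_leaders (Suc k) \<and> c \<in> set (cl (Suc k))}"
  unfolding induced_leaders_def using induced_cl_Suc_right[of cl k "m - Suc k"] by (simp add: Suc_diff_Suc)

lemma induced_leaders_m: "induced_leaders m = {id}"
  unfolding induced_leaders_def by simp

lemma induced_leaders_in_G: "k \<le> m \<Longrightarrow> u \<in> induced_leaders k \<Longrightarrow> u \<in> G"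
  unfolding induced_leaders_def using induced_cl_subset_Gs[of k "m - k"] Gs_m by auto

lemma in_induced_leaders_0: "g \<in> G \<Longrightarrow> g \<in> induced_leaders 0"
  unfolding induced_leaders_def using induced_cl_factor[of 0 m g] Gs_0 Gs_m by auto

lemma induced_leaders_factor_unique:
  "k \<le> m \<Longrightarrow> u \<in> induced_leaders k \<Longrightarrow> u' \<in> induced_leaders k \<Longrightarrow>
     h \<in> Gs k \<Longrightarrow> h' \<in> Gs k \<Longrightarrow> u \<circ> h = u' \<circ> h' \<Longrightarrow> u = u' \<and> h = h'"
  unfolding induced_leaders_def using induced_cl_factor_unique[of k "m - k"] by simp

abbreviation decoded :: "complex^'n \<Rightarrow> nat \<Rightarrow> 'n vmap" where
  "decoded r k \<equiv> snd (dec_state x0 cl r k)"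

lemma first_min_cl: "Suc k \<le> m \<Longrightarrow> first_min f (cl (Suc k)) \<in> set (cl (Suc k))"
  using first_min_in_set id_in_cl by (metis empty_iff empty_set)

lemma decoded_in_Gs: "k \<le> m \<Longrightarrow> decoded r k \<in> Gs k"
proof (induction k)
  case (Suc k)
  have "decoded r k \<in> Gs (Suc k)" using Suc Gs_mono[of k "Suc k"] by auto
  moreover have "first_min f (cl (Suc k)) \<in> Gs (Suc k)" for f
    using first_min_cl cl_subset_Gs Suc.prems by blast
  ultimately show ?case unfolding dec_state_snd_Suc using Gs_comp_closed[OF Suc.prems] by blast
qed (simp add: Gs_0 id_def)

lemma decoded_factor: "k + j \<le> m \<Longrightarrow> \<exists>q\<in>induced_cl cl k j. decoded r (k + j) = q \<circ> decoded r k"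
proof (induction j)
  case (Suc j)
  then obtain q where q: "q \<in> induced_cl cl k j" "decoded r (k + j) = q \<circ> decoded r k"
    by (metis Suc_leD add_Suc_right)
  let ?c = "first_min (\<lambda>a. norm (a (decoded r (k + j) r) - x0)) (cl (Suc (k + j)))"
  have "?c \<circ> q \<in> induced_cl cl k (Suc j)" using q(1) first_min_cl Suc.prems by auto
  moreover have "decoded r (k + Suc j) = (?c \<circ> q) \<circ> decoded r k"
    by (simp only: dec_state_snd_Suc q(2) o_assoc add_Suc_right)
  ultimately show ?case by blast
qed simp

lemma decoded_factor_leaders: "k \<le> m \<Longrightarrow> \<exists>q\<in>induced_leaders k. decoded r m = q \<circ> decoded r k"
  unfolding induced_leaders_def using decoded_factor[of k "m - k" r] by simp

text \<open>Since the stabiliser of \<open>x0\<close> is trivial, this is \<open>x0 \<in> u (FR (Gs k))\<close> written in terms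
  of the point \<open>inv u x0\<close>.\<close>
definition minimal_leader :: "nat \<Rightarrow> 'n vmap \<Rightarrow> bool" where
  "minimal_leader k u \<longleftrightarrow> (\<forall>h\<in>Gs k. h \<noteq> id \<longrightarrow> norm (inv u x0 - x0) < norm (h (inv u x0) - x0))"

lemma minimal_rep_iff: "k \<le> m \<Longrightarrow> c \<in> G \<Longrightarrow> minimal_rep x0 (Gs k) c \<longleftrightarrow> minimal_leader k c"
proof -
  assume "k \<le> m" "c \<in> G"
  then have "stab (Gs k) x0 = {id}" using stab_eq_id Gs_subset_G id_in_Gs by blast
  moreover have "x0 \<in> c ` X \<longleftrightarrow> inv c x0 \<in> X" for X
    using G_apply_inv[OF \<open>c \<in> G\<close>] G_inv_apply[OF \<open>c \<in> G\<close>] by (metis image_iff)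
  ultimately show ?thesis unfolding minimal_rep_def minimal_leader_def fundamental_region_def by auto
qed

lemma minimal_leader_id: "k \<le> m \<Longrightarrow> minimal_leader k id"
  unfolding minimal_leader_def using Gs_subset_G eq_id_if_fixes_x0 by fastforce

definition orbit_gap :: "real \<Rightarrow> bool" where
  "orbit_gap \<delta> \<longleftrightarrow> (\<forall>a\<in>G. \<forall>b\<in>G. norm (a x0 - x0) < norm (b x0 - x0) \<longrightarrow>
                       2 * \<delta> \<le> norm (b x0 - x0) - norm (a x0 - x0))"

lemma orbit_gap_exists: obtains \<delta> where "\<delta> > 0" "orbit_gap \<delta>"
proof -
  obtain \<epsilon> where "\<epsilon> > 0" and sep:
    "\<And>s t. s \<in> (\<lambda>g. norm (g x0 - x0)) ` G \<Longrightarrow> t \<in> (\<lambda>g. norm (g x0 - x0)) ` G \<Longrightarrow> s < t \<Longrightarrow> \<epsilon> \<le> t - s"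
    using finite_real_set_separated[of "(\<lambda>g. norm (g x0 - x0)) ` G"] finite_G by blast
  have "orbit_gap (\<epsilon> / 2)"
    unfolding orbit_gap_def using sep[OF imageI imageI] by fastforce
  with \<open>\<epsilon> > 0\<close> show thesis using that[of "\<epsilon> / 2"] by simp
qed

lemma G_norm_diff_le: "b \<in> G \<Longrightarrow> \<bar>norm (b \<rho> - x0) - norm (b z - x0)\<bar> \<le> norm (\<rho> - z)"
  using norm_triangle_ineq3[of "b \<rho> - x0" "b z - x0"] G_dist[of b \<rho> z] by simp

text \<open>Near a codeword, distances to \<open>x0\<close> from the candidates \<open>a \<rho>\<close> differ from the exact ones
  by less than \<open>\<delta>\<close>, while distinct exact ones differ by at least \<open>2\<delta>\<close>; so the decoder's
  choice is the one dictated by minimality.\<close>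
lemma decoder_picks_leader:
  assumes gap: "orbit_gap \<delta>" and le: "Suc k \<le> m" and d: "d \<in> G"
    and min: "minimal_leader (Suc k) d" and c: "c \<in> set (cl (Suc k))"
    and close: "norm (\<rho> - inv (d \<circ> c) x0) < \<delta>"
  shows "first_min (\<lambda>a. norm (a \<rho> - x0)) (cl (Suc k)) = c"
proof (rule first_min_eqI[OF c])
  fix a assume a: "a \<in> set (cl (Suc k))" "a \<noteq> c"
  have cG: "c \<in> G" and aG: "a \<in> G" using cl_in_G[OF le] a c by auto
  define z where "z = inv (d \<circ> c) x0"
  have cz: "c z = inv d x0" unfolding z_def G_inv_o[OF d cG] using G_apply_inv[OF cG] by simp
  have "a \<in> Gs (Suc k)" "c \<in> Gs (Suc k)" using a c cl_subset_Gs[OF le] by auto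
  hence "a \<circ> inv c \<in> Gs (Suc k)" using le Gs_inv_closed Gs_comp_closed by blast
  moreover have "a \<circ> inv c \<noteq> id"
  proof
    assume "a \<circ> inv c = id"
    hence "a = c" using G_inv_comp[OF cG] by (metis comp_id o_assoc id_comp)
    with a(2) show False ..
  qed
  ultimately have "norm (c z - x0) < norm ((a \<circ> inv c) (c z) - x0)"
    using min unfolding minimal_leader_def cz by blast
  hence lt: "norm (c z - x0) < norm (a z - x0)" using G_inv_apply[OF cG] by simp
  have orbit: "\<exists>p\<in>G. b z = p x0" if "b \<in> G" for b
    unfolding z_def using that d cG G_comp_closed G_inv_closed by (metis comp_apply)
  obtain p q where p: "p \<in> G" "a z = p x0" and q: "q \<in> G" "c z = q x0"
    using orbit[OF aG] orbit[OF cG] by blast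
  have "2 * \<delta> \<le> norm (p x0 - x0) - norm (q x0 - x0)"
    using gap p q lt unfolding orbit_gap_def by simp
  hence "2 * \<delta> \<le> norm (a z - x0) - norm (c z - x0)" using p q by simp
  moreover have "norm (\<rho> - z) < \<delta>" using close z_def by simp
  ultimately show "norm (c \<rho> - x0) < norm (a \<rho> - x0)"
    using G_norm_diff_le[OF aG, of \<rho> z] G_norm_diff_le[OF cG, of \<rho> z] by linarith
qed

lemma decoder_tracks_codeword:
  assumes gap: "orbit_gap \<delta>"
    and min: "\<And>k u. k \<le> m \<Longrightarrow> u \<in> induced_leaders k \<Longrightarrow> minimal_leader k u"
    and g: "g \<in> G" and close: "norm (r - inv g x0) < \<delta>"
  shows "k \<le> m \<Longrightarrow> \<exists>u\<in>induced_leaders k. g = u \<circ> decoded r k \<and> norm (decoded r k r - inv u x0) < \<delta>"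
proof (induction k)
  case 0
  show ?case using in_induced_leaders_0[OF g] close by (auto simp: id_def)
next
  case (Suc k)
  then obtain u where u: "u \<in> induced_leaders k" "g = u \<circ> decoded r k"
      "norm (decoded r k r - inv u x0) < \<delta>" using Suc_leD by blast
  then obtain d c where dc: "u = d \<circ> c" "d \<in> induced_leaders (Suc k)" "c \<in> set (cl (Suc k))"
    using induced_leaders_Suc[OF Suc.prems] by auto
  have dG: "d \<in> G" and cG: "c \<in> G" using dc Suc.prems induced_leaders_in_G cl_in_G by auto
  have step: "decoded r (Suc k) = c \<circ> decoded r k"
    using decoder_picks_leader[OF gap Suc.prems dG min[OF Suc.prems dc(2)] dc(3)] u(3) dc(1)
    by (simp add: dec_state_snd_Suc)
  have "g = d \<circ> decoded r (Suc k)" using u(2) dc(1) step by (simp add: o_assoc)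
  moreover have "inv d x0 = c (inv u x0)"
    unfolding dc(1) G_inv_o[OF dG cG] using G_apply_inv[OF cG] by simp
  hence "norm (decoded r (Suc k) r - inv d x0) = norm (decoded r k r - inv u x0)"
    using step G_dist[OF cG] by simp
  ultimately have "g = d \<circ> decoded r (Suc k) \<and> norm (decoded r (Suc k) r - inv d x0) < \<delta>"
    using u(3) by simp
  thus ?case using dc(2) by blast
qed

lemma decodes_correctly_if_minimal:
  assumes "\<And>k u. k \<le> m \<Longrightarrow> u \<in> induced_leaders k \<Longrightarrow> minimal_leader k u"
  shows "decodes_correctly_with_noise G x0 cl m"
proof -
  obtain \<delta> where "\<delta> > 0" "orbit_gap \<delta>" by (rule orbit_gap_exists)
  have "subgroup_decode x0 cl m r \<in> (\<lambda>s. s \<circ> g) ` stab G x0"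
    if g: "g \<in> G" and close: "norm (r - inv g x0) < \<delta>" for g r
  proof -
    obtain u where "u \<in> induced_leaders m" "g = u \<circ> decoded r m"
      using decoder_tracks_codeword[OF \<open>orbit_gap \<delta>\<close> assms g close, of m] by blast
    hence "g = decoded r m" using induced_leaders_m by simp
    thus ?thesis unfolding subgroup_decode_def using stab_eq_id id_in_G by auto
  qed
  thus ?thesis unfolding decodes_correctly_with_noise_def using \<open>\<delta> > 0\<close> by blast
qed

lemma decoded_trace:
  assumes le: "Suc k \<le> m" and d: "d \<in> induced_leaders (Suc k)" and c: "c \<in> set (cl (Suc k))"
    and dec: "decoded r m = d \<circ> c"
  shows "decoded r k = id" and "decoded r (Suc k) = c"
proof -
  obtain q where q: "q \<in> induced_leaders k" "decoded r m = q \<circ> decoded r k"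
    using decoded_factor_leaders le Suc_leD by blast
  have "d \<circ> c \<in> induced_leaders k" using induced_leaders_Suc[OF le] d c by blast
  moreover have "q \<circ> decoded r k = (d \<circ> c) \<circ> id" using q(2) dec by simp
  moreover have "decoded r k \<in> Gs k" "id \<in> Gs k" using le decoded_in_Gs id_in_Gs by simp_all
  ultimately show "decoded r k = id"
    using induced_leaders_factor_unique[of k q "d \<circ> c" "decoded r k" id] q(1) le by simp
  obtain q' where q': "q' \<in> induced_leaders (Suc k)" "decoded r m = q' \<circ> decoded r (Suc k)"
    using decoded_factor_leaders le by blast
  have "c \<in> Gs (Suc k)" "decoded r (Suc k) \<in> Gs (Suc k)"
    using cl_subset_Gs le c decoded_in_Gs by auto
  then show "decoded r (Suc k) = c"
    using induced_leaders_factor_unique[of "Suc k" q' d "decoded r (Suc k)" c] q' d dec le by simp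
qed

text \<open>If \<open>inv c (inv d x0)\<close> were no farther from \<open>x0\<close> than \<open>inv d x0\<close>, received words near the
  codeword of \<open>d \<circ> c\<close> could be pushed to the side of the bisector where step \<open>Suc k\<close> prefers
  \<open>id\<close> to \<open>c\<close>.\<close>
lemma leader_moves_away_if_correct:
  assumes correct: "decodes_correctly_with_noise G x0 cl m"
    and le: "Suc k \<le> m" and d: "d \<in> induced_leaders (Suc k)"
    and c: "c \<in> set (cl (Suc k))" and "c \<noteq> id"
  shows "norm (inv d x0 - x0) < norm (inv c (inv d x0) - x0)"
proof -
  obtain \<delta> where "\<delta> > 0" and decode: "\<forall>g\<in>G. \<forall>r. norm (r - inv g x0) < \<delta> \<longrightarrow>
      subgroup_decode x0 cl m r \<in> (\<lambda>s. s \<circ> g) ` stab G x0"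
    using correct unfolding decodes_correctly_with_noise_def by blast
  have dG: "d \<in> G" and cG: "c \<in> G" using d c le induced_leaders_in_G cl_in_G by auto
  define z where "z = inv c (inv d x0)"
  define w where "w = inv c x0"
  have closer: "norm (r - w) \<le> norm (r - x0)" if "norm (r - z) < \<delta>" for r
  proof -
    have dcG: "d \<circ> c \<in> G" and "inv (d \<circ> c) x0 = z"
      unfolding z_def using G_comp_closed[OF dG cG] G_inv_o[OF dG cG] by simp_all
    hence "subgroup_decode x0 cl m r \<in> (\<lambda>s. s \<circ> (d \<circ> c)) ` stab G x0"
      using bspec[OF decode dcG, rule_format, of r] that by simp
    hence "decoded r m = d \<circ> c"
      using stab_eq_id[OF order_refl id_in_G] unfolding subgroup_decode_def by simp
    hence "first_min (\<lambda>a. norm (a r - x0)) (cl (Suc k)) = c"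
      using decoded_trace[OF le d c] dec_state_snd_Suc[of x0 cl r k] by simp
    hence "norm (c r - x0) \<le> norm (r - x0)"
      using first_min_le[OF id_in_cl[OF le], of "\<lambda>a. norm (a r - x0)"] by simp
    moreover have "norm (c r - x0) = norm (r - w)"
      using G_dist[OF cG, of r w] G_apply_inv[OF cG] w_def by simp
    ultimately show ?thesis by simp
  qed
  have "w \<noteq> x0"
  proof
    assume "w = x0"
    hence "inv c = id" using eq_id_if_fixes_x0[OF G_inv_closed[OF cG]] w_def by simp
    have "c = inv (inv c)" using inv_inv_eq[OF G_bij[OF cG]] by simp
    also have "\<dots> = id" using \<open>inv c = id\<close> by simp
    finally show False using \<open>c \<noteq> id\<close> by simp
  qed
  have "norm (z - w) < norm (z - x0)" by (rule norm_lt_if_ball_le[OF \<open>\<delta> > 0\<close> \<open>w \<noteq> x0\<close> closer])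
  moreover have "norm (z - w) = norm (inv d x0 - x0)"
    using G_dist[OF cG, of z w] G_apply_inv[OF cG] z_def w_def by simp
  ultimately show ?thesis by (simp add: z_def)
qed

lemma minimal_if_decodes_correctly:
  assumes correct: "decodes_correctly_with_noise G x0 cl m"
  shows "k \<le> m \<Longrightarrow> u \<in> induced_leaders k \<Longrightarrow> minimal_leader k u"
proof (induction k arbitrary: u)
  case 0
  then show ?case unfolding minimal_leader_def using Gs_0 by simp
next
  case (Suc k)
  note le = Suc.prems(1)
  have uG: "u \<in> G" using Suc.prems induced_leaders_in_G by blast
  show ?case unfolding minimal_leader_def
  proof (intro ballI impI)
    fix h assume h: "h \<in> Gs (Suc k)" "h \<noteq> id"
    have hG: "h \<in> G" using h le Gs_subset_G by blast
    obtain c where c: "c \<in> set (cl (Suc k))" "c \<in> left_coset (inv h) (Gs k)"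
      using cl_unique[OF le] Gs_inv_closed[OF le h(1)] by blast
    then obtain w where w: "w \<in> Gs k" "c = inv h \<circ> w" unfolding left_coset_def by auto
    have cG: "c \<in> G" using cl_in_G[OF le c(1)] .
    have "h \<circ> c = w" using w(2) G_comp_inv[OF hG] by (simp add: o_assoc)
    hence hw: "h = w \<circ> inv c" using G_comp_inv[OF cG] by (metis comp_id o_assoc)
    define y where "y = inv u x0"
    define v where "v = inv c y"
    have "u \<circ> c \<in> induced_leaders k" using induced_leaders_Suc[OF le] Suc.prems(2) c(1) by blast
    hence "minimal_leader k (u \<circ> c)" using Suc.IH le by simp
    moreover have "inv (u \<circ> c) x0 = v" unfolding v_def y_def G_inv_o[OF uG cG] by simp
    ultimately have second: "norm (v - x0) < norm (w v - x0)" if "w \<noteq> id"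
      using w(1) that unfolding minimal_leader_def by blast
    have first: "norm (y - x0) < norm (v - x0)" if "c \<noteq> id"
      using leader_moves_away_if_correct[OF correct le Suc.prems(2) c(1) that] v_def y_def by simp
    have weak: "norm (v - x0) \<le> norm (w v - x0)" using second by (cases "w = id") force+
    have "norm (y - x0) < norm (h y - x0)"
    proof (cases "c = id")
      case True
      hence "h = w" "v = y" using hw by (simp_all add: v_def)
      thus ?thesis using second h(2) by simp
    next
      case False
      thus ?thesis using first weak unfolding hw v_def by simp
    qed
    thus "norm (inv u x0 - x0) < norm (h (inv u x0) - x0)" unfolding y_def .
  qed
qed

end

theorem theoremA:
  fixes G :: "'n::finite vmap set" and x0 :: "complex^'n"
    and Gs :: "nat \<Rightarrow> 'n vmap set" and m :: nat and cl :: "nat \<Rightarrow> 'n vmap list"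
  assumes "finite_unitary_group G"
    and "norm x0 = 1"
    and "full_orbit G x0"
    and "subgroup_chain Gs m G"
    and "\<forall>k. 1 \<le> k \<and> k \<le> m \<longrightarrow> coset_leaders (cl k) (Gs (k - 1)) (Gs k)"
  shows "decodes_correctly_with_noise G x0 cl m \<longleftrightarrow>
         (\<forall>k<m. \<forall>c\<in>induced_cl cl k (m - k). minimal_rep x0 (Gs k) c)"
proof -
  have "finite G" "\<And>g. g \<in> G \<Longrightarrow> unitary_map g" "subgroup_of G G"
    using assms(1) unfolding finite_unitary_group_def by auto
  moreover have "inj_on (\<lambda>g. g x0) G"
    using assms(3) \<open>finite G\<close> unfolding full_orbit_def by (simp add: eq_card_imp_inj_on)
  ultimately interpret subgroup_decoding G x0 Gs m cl
    using assms(4,5) by unfold_locales auto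
  have "minimal_rep x0 (Gs k) u \<longleftrightarrow> minimal_leader k u" if "k \<le> m" "u \<in> induced_leaders k" for k u
    using minimal_rep_iff induced_leaders_in_G that by blast
  moreover have "minimal_leader m u" if "u \<in> induced_leaders m" for u
    using that induced_leaders_m minimal_leader_id by simp
  ultimately have "(\<forall>k<m. \<forall>c\<in>induced_cl cl k (m - k). minimal_rep x0 (Gs k) c) \<longleftrightarrow>
      (\<forall>k\<le>m. \<forall>u\<in>induced_leaders k. minimal_leader k u)"
    unfolding induced_leaders_def[symmetric] by (metis le_less less_imp_le)
  then show ?thesis using decodes_correctly_if_minimal minimal_if_decodes_correctly by blast
qed

end
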